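(* Let $f\in\mathrm{Rat}_d(\mathbb{C}_v)$, $d\ge 2$, satisfy $|f(x)|>1$ for every $x\in\mathbb{C}_v$ with $|x|>1$. Then for every $\gamma>0$ there is an open subset $W\subseteq\mathrm{Rat}_d(\mathbb{C}_v)$ containing $f$ such that every $g\in W$ satisfies (a) $|g(x)|>1$ for all $x\in\mathbb{C}_v$ with $|x|>1$, and (b) $|g(x)-f(x)|<\gamma$ for all $x\in\mathbb{C}_v$ with $|f(x)|\le1$.
   Context: $\mathbb{C}_v$ is an algebraically closed field of characteristic zero, complete with respect to a nontrivial non-archimedean absolute value. $\mathrm{Rat}_d(\mathbb{C}_v)$ is the set of rational functions of degree exactly $d$ (degree of $F/G$ with $F,G$ coprime polynomials being $\max\{\deg F,\deg G\}$), topologized via the inclusion into $\mathbb{P}^{2d+1}(\mathbb{C}_v)$ sending $f$ to its tuple of $2d+2$ coefficients. *)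

theory Defs
  imports "HOL-Computational_Algebra.Computational_Algebra"
begin

text \<open>abv is a nontrivial non-archimedean absolute value on the field 'a (of
characteristic zero, enforced by the type class), 'a is algebraically closed and
complete with respect to abv.  This models the field C_v.\<close>

definition nonarch_abs :: "('a::field \<Rightarrow> real) \<Rightarrow> bool" where
  "nonarch_abs abv \<longleftrightarrow>
     (\<forall>x. abv x = 0 \<longleftrightarrow> x = 0) \<and>
     (\<forall>x y. abv (x * y) = abv x * abv y) \<and>
     (\<forall>x y. abv (x + y) \<le> max (abv x) (abv y))"

definition nontrivial_abs :: "('a::field \<Rightarrow> real) \<Rightarrow> bool" where
  "nontrivial_abs abv \<longleftrightarrow> (\<exists>x. x \<noteq> 0 \<and> abv x \<noteq> 1)"

definition abs_complete :: "('a::field \<Rightarrow> real) \<Rightarrow> bool" where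
  "abs_complete abv \<longleftrightarrow>
     (\<forall>X :: nat \<Rightarrow> 'a.
        (\<forall>e>0. \<exists>N. \<forall>m\<ge>N. \<forall>n\<ge>N. abv (X m - X n) < e) \<longrightarrow>
        (\<exists>L. \<forall>e>0. \<exists>N. \<forall>n\<ge>N. abv (X n - L) < e))"

definition alg_closed_field :: "'a::field itself \<Rightarrow> bool" where
  "alg_closed_field _ \<longleftrightarrow> (\<forall>p :: 'a poly. degree p > 0 \<longrightarrow> (\<exists>x. poly p x = 0))"

definition Cv_field :: "('a::field_char_0 \<Rightarrow> real) \<Rightarrow> bool" where
  "Cv_field abv \<longleftrightarrow> alg_closed_field TYPE('a) \<and> nonarch_abs abv \<and>
                     nontrivial_abs abv \<and> abs_complete abv"

text \<open>A rational function F/G is represented by its (numerator, denominator) pair.  Its coefficient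
tuple (coeff F 0..d, coeff G 0..d) is a point of C_v^(2d+2) minus 0, and two pairs
represent the same element of Rat_d iff they differ by a nonzero scalar.\<close>

definition is_ratd :: "nat \<Rightarrow> 'a::field poly \<times> 'a poly \<Rightarrow> bool" where
  "is_ratd d FG \<longleftrightarrow> coprime (fst FG) (snd FG) \<and> max (degree (fst FG)) (degree (snd FG)) = d"

text \<open>Open subsets of Rat_d (topology induced from P^(2d+1)), given as
scaling-saturated sets of representing pairs which are open in the coefficient
topology.\<close>

definition ratd_open :: "('a::field \<Rightarrow> real) \<Rightarrow> nat \<Rightarrow> ('a poly \<times> 'a poly) set \<Rightarrow> bool" where
  "ratd_open abv d W \<longleftrightarrow>
     W \<subseteq> {FG. is_ratd d FG} \<and>
     (\<forall>F G c. (F, G) \<in> W \<and> c \<noteq> 0 \<longrightarrow> (smult c F, smult c G) \<in> W) \<and>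
     (\<forall>F G. (F, G) \<in> W \<longrightarrow> (\<exists>e>0. \<forall>F' G'. is_ratd d (F', G') \<and>
         (\<forall>i\<le>d. abv (coeff F' i - coeff F i) < e \<and> abv (coeff G' i - coeff G i) < e)
         \<longrightarrow> (F', G') \<in> W))"

text \<open>|f(x)| > 1 for f = F/G, where a pole (G(x) = 0) counts as |f(x)| = infinity.\<close>

definition rat_abs_gt1 :: "('a::field \<Rightarrow> real) \<Rightarrow> 'a poly \<times> 'a poly \<Rightarrow> 'a \<Rightarrow> bool" where
  "rat_abs_gt1 abv FG x \<longleftrightarrow> poly (snd FG) x = 0 \<or> abv (poly (fst FG) x / poly (snd FG) x) > 1"

end

theory Submission
  imports Defs
begin

text \<open>Write f = F/G with F, G coprime of degree at most d.  Bezout's identity and the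
ultrametric inequality give a constant c > 0 with max(|F(x)|, |G(x)|) \<ge> c max(1, |x|)^d.
Changing the coefficients by less than e \<le> c moves F(x) and G(x) by less than
e max(1, |x|)^d.  By the ultrametric inequality this cannot change which of |F(x)|, |G(x)|
is larger when |x| > 1, nor the value of |G(x)| when |f(x)| \<le> 1, and there it moves f(x)
by less than e/c.  The neighbourhood of f is the set of rational functions having a scalar
multiple whose coefficients are e-close to those of (F, G); it is open because every point
of an ultrametric ball is a centre of it.\<close>

lemma poly_bezout:
  fixes P Q :: "'a::field poly"
  assumes "coprime P Q"
  shows "\<exists>A B. A * P + B * Q = 1"
  using assms
proof (induction "degree Q" arbitrary: P Q rule: less_induct)
  case less
  consider "Q = 0" | "is_unit Q" | "Q \<noteq> 0" "\<not> is_unit Q" by blast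
  then show ?case
  proof cases
    case 1
    with less.prems obtain E where "1 = P * E" by (auto simp: dvd_def)
    then have "E * P + 0 * Q = 1" by (simp add: mult.commute)
    then show ?thesis by blast
  next
    case 2
    then obtain E where "1 = Q * E" by (auto simp: dvd_def)
    then have "0 * P + E * Q = 1" by (simp add: mult.commute)
    then show ?thesis by blast
  next
    case 3
    then have "0 < degree Q" using is_unit_iff_degree by blast
    then have "degree (P mod Q) < degree Q" using degree_mod_less[OF \<open>Q \<noteq> 0\<close>, of P] by auto
    moreover have "coprime Q (P mod Q)"
      using less.prems \<open>Q \<noteq> 0\<close> by (simp add: coprime_commute)
    ultimately obtain A B where AB: "A * Q + B * (P mod Q) = 1" using less.hyps by blast
    have "B * P + (A - B * (P div Q)) * Q = A * Q + B * (P - P div Q * Q)"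
      by (simp add: algebra_simps)
    also have "\<dots> = 1" using AB by (simp add: minus_div_mult_eq_mod)
    finally show ?thesis by blast
  qed
qed

lemma is_ratd_smult:
  fixes P Q :: "'a::field poly"
  assumes "is_ratd d (P, Q)" "k \<noteq> 0"
  shows "is_ratd d (smult k P, smult k Q)"
  using assms coprime_mult_self_left_iff[of "[:k:]" P Q]
  by (simp add: is_ratd_def is_unit_const_poly_iff dvd_field_iff)

definition coeffs_close :: "('a::field \<Rightarrow> real) \<Rightarrow> nat \<Rightarrow> real \<Rightarrow> 'a poly \<Rightarrow> 'a poly \<Rightarrow> bool" where
  "coeffs_close abv d e P Q \<longleftrightarrow> (\<forall>i\<le>d. abv (coeff P i - coeff Q i) < e)"

text \<open>The trace on Rat_d of the image in P^(2d+1) of an e-ball around the coefficients of FG.\<close>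

definition ratd_ball ::
    "('a::field \<Rightarrow> real) \<Rightarrow> nat \<Rightarrow> real \<Rightarrow> 'a poly \<times> 'a poly \<Rightarrow> ('a poly \<times> 'a poly) set" where
  "ratd_ball abv d e FG = {(P, Q). is_ratd d (P, Q) \<and> (\<exists>k. k \<noteq> 0 \<and>
     coeffs_close abv d e (smult k P) (fst FG) \<and> coeffs_close abv d e (smult k Q) (snd FG))}"

locale nonarch_absval =
  fixes abv :: "'a::field \<Rightarrow> real"
  assumes nonarch: "nonarch_abs abv" and abv_nonneg: "0 \<le> abv x"
begin

lemma abv_eq_0_iff [simp]: "abv x = 0 \<longleftrightarrow> x = 0"
  using nonarch unfolding nonarch_abs_def by blast

lemma abv_0 [simp]: "abv 0 = 0"
  by simp

lemma abv_mult: "abv (x * y) = abv x * abv y"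
  using nonarch unfolding nonarch_abs_def by blast

lemma abv_add_le_max: "abv (x + y) \<le> max (abv x) (abv y)"
  using nonarch unfolding nonarch_abs_def by blast

lemma abv_pos: "x \<noteq> 0 \<Longrightarrow> 0 < abv x"
  using abv_nonneg[of x] by (simp add: less_le)

lemma abv_1 [simp]: "abv 1 = 1"
  using abv_mult[of 1 1] by simp

lemma abv_minus [simp]: "abv (- x) = abv x"
proof -
  have "abv (-1) * abv (-1) = 1" using abv_mult[of "-1" "-1"] by simp
  then have "abv (-1) = 1"
    using abv_nonneg[of "-1"] power2_eq_1_iff[of "abv (-1)"] by (simp add: power2_eq_square)
  then show ?thesis using abv_mult[of "-1" x] by simp
qed

lemma abv_inverse: "abv (inverse x) = inverse (abv x)"
proof (cases "x = 0")
  case False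
  then have "abv x * abv (inverse x) = 1" using abv_mult[of x "inverse x"] by simp
  then show ?thesis by (rule inverse_unique[symmetric])
qed simp

lemma abv_divide: "abv (x / y) = abv x / abv y"
  by (simp add: divide_inverse abv_mult abv_inverse)

lemma abv_power: "abv (x ^ n) = abv x ^ n"
  by (induction n) (simp_all add: abv_mult)

lemma abv_add_less: "abv x < B \<Longrightarrow> abv y < B \<Longrightarrow> abv (x + y) < B"
  using abv_add_le_max[of x y] by simp

lemma abv_diff_less: "abv x < B \<Longrightarrow> abv y < B \<Longrightarrow> abv (x - y) < B"
  using abv_add_less[of x B "- y"] by simp

lemma abv_add_eq_left:
  assumes "abv y < abv x"
  shows "abv (x + y) = abv x"
proof -
  have "abv x \<le> max (abv (x + y)) (abv (- y))" using abv_add_le_max[of "x + y" "- y"] by simp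
  then show ?thesis using abv_add_le_max[of x y] assms by (auto simp: max_def split: if_splits)
qed

lemma abv_sum_less:
  assumes "finite A" "0 < B" "\<And>i. i \<in> A \<Longrightarrow> abv (f i) < B"
  shows "abv (sum f A) < B"
  using assms by (induction A rule: finite_induct) (auto intro: abv_add_less)

lemma abv_poly_less:
  assumes "degree p \<le> n" "\<And>i. i \<le> n \<Longrightarrow> abv (coeff p i) < e" "0 < e"
  shows "abv (poly p x) < e * max 1 (abv x) ^ n"
proof -
  let ?M = "max 1 (abv x) ^ n"
  have "abv (\<Sum>i\<le>degree p. coeff p i * x ^ i) < e * ?M"
  proof (rule abv_sum_less)
    fix i assume "i \<in> {..degree p}"
    then have i: "i \<le> n" using assms(1) by simp
    have "abv x ^ i \<le> max 1 (abv x) ^ i" by (simp add: abv_nonneg power_mono)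
    also have "\<dots> \<le> ?M" using i by (intro power_increasing) auto
    finally have "abv (coeff p i) * abv x ^ i \<le> abv (coeff p i) * ?M"
      by (simp add: abv_nonneg mult_left_mono)
    also have "\<dots> < e * ?M" using assms(2)[OF i] by simp
    finally show "abv (coeff p i * x ^ i) < e * ?M" by (simp add: abv_mult abv_power)
  qed (use assms in auto)
  then show ?thesis by (simp add: poly_altdef)
qed

lemma abv_poly_bounded: "\<exists>M>0. \<forall>x. abv (poly p x) \<le> M * max 1 (abv x) ^ n"
  if "degree p \<le> n"
proof -
  define M where "M = 1 + (\<Sum>i\<le>n. abv (coeff p i))"
  have "abv (coeff p i) < M" if "i \<le> n" for i
  proof -
    have "abv (coeff p i) \<le> (\<Sum>i\<le>n. abv (coeff p i))"
      using that by (intro member_le_sum) (auto simp: abv_nonneg)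
    then show ?thesis unfolding M_def by simp
  qed
  moreover have "0 < M" unfolding M_def by (simp add: abv_nonneg sum_nonneg add_pos_nonneg)
  ultimately show ?thesis using abv_poly_less[OF \<open>degree p \<le> n\<close>] by (meson less_imp_le)
qed

lemma abv_poly_eq_leading_term:
  assumes "P \<noteq> 0"
  shows "\<exists>T\<ge>1. \<forall>x. T \<le> abv x \<longrightarrow> abv (poly P x) = abv (lead_coeff P) * abv x ^ degree P"
proof -
  define d where "d = degree P"
  define a where "a = lead_coeff P"
  have a0: "0 < abv a" unfolding a_def using assms by (simp add: abv_pos)
  define R where "R = (\<Sum>i<d. abv (coeff P i))"
  define T where "T = 1 + R / abv a"
  have "0 \<le> R" unfolding R_def by (simp add: abv_nonneg sum_nonneg)
  then have T1: "1 \<le> T" unfolding T_def using a0 by simp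
  have "abv (poly P x) = abv a * abv x ^ d" if xT: "T \<le> abv x" for x
  proof -
    have x1: "1 \<le> abv x" using xT T1 by simp
    have "R / abv a < abv x" using xT by (simp add: T_def)
    then have R_less: "R < abv a * abv x" using a0 by (simp add: field_simps)
    have "abv (\<Sum>i<d. coeff P i * x ^ i) < abv a * abv x ^ d"
    proof (rule abv_sum_less)
      fix i assume i: "i \<in> {..<d}"
      have "abv (coeff P i) \<le> R"
        unfolding R_def using i by (intro member_le_sum) (auto simp: abv_nonneg)
      then have "abv (coeff P i) * abv x ^ i < (abv a * abv x) * abv x ^ i"
        using R_less x1 by (intro mult_strict_right_mono) auto
      also have "\<dots> = abv a * abv x ^ Suc i" by simp
      also have "\<dots> \<le> abv a * abv x ^ d" using i x1 a0 by (intro mult_left_mono power_increasing) auto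
      finally show "abv (coeff P i * x ^ i) < abv a * abv x ^ d" by (simp add: abv_mult abv_power)
    qed (use a0 x1 in auto)
    moreover have "poly P x = a * x ^ d + (\<Sum>i<d. coeff P i * x ^ i)"
      by (simp add: poly_altdef a_def d_def lessThan_Suc_atMost[symmetric])
    ultimately show ?thesis by (simp add: abv_add_eq_left abv_mult abv_power)
  qed
  then show ?thesis using T1 unfolding a_def d_def by blast
qed

lemma coprime_abv_poly_max_bounded_below:
  fixes F G :: "'a poly"
  assumes "coprime F G"
  shows "\<exists>M>0. \<exists>k. \<forall>x. 1 \<le> M * max 1 (abv x) ^ k * max (abv (poly F x)) (abv (poly G x))"
proof -
  obtain A B where AB: "A * F + B * G = 1" using poly_bezout[OF assms] by blast
  define k where "k = max (degree A) (degree B)"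
  obtain MA where MA: "0 < MA" "\<And>x. abv (poly A x) \<le> MA * max 1 (abv x) ^ k"
    using abv_poly_bounded[of A k] unfolding k_def by auto
  obtain MB where MB: "0 < MB" "\<And>x. abv (poly B x) \<le> MB * max 1 (abv x) ^ k"
    using abv_poly_bounded[of B k] unfolding k_def by auto
  define M where "M = max MA MB"
  have "1 \<le> M * max 1 (abv x) ^ k * max (abv (poly F x)) (abv (poly G x))" (is "_ \<le> ?B") for x
  proof -
    have bound: "abv (poly C x) * abv (poly H x) \<le> ?B"
      if "abv (poly C x) \<le> MC * max 1 (abv x) ^ k" "0 < MC" "MC \<le> M"
        "abv (poly H x) \<le> max (abv (poly F x)) (abv (poly G x))" for C H MC
    proof -
      have "abv (poly C x) * abv (poly H x) \<le> MC * max 1 (abv x) ^ k * max (abv (poly F x)) (abv (poly G x))"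
        using that by (intro mult_mono) (auto simp: abv_nonneg)
      also have "\<dots> \<le> ?B"
        using that by (intro mult_right_mono) (auto simp: abv_nonneg le_max_iff_disj)
      finally show ?thesis .
    qed
    have "poly A x * poly F x + poly B x * poly G x = 1"
      using arg_cong[OF AB, of "\<lambda>p. poly p x"] by simp
    then have "1 \<le> max (abv (poly A x) * abv (poly F x)) (abv (poly B x) * abv (poly G x))"
      using abv_add_le_max[of "poly A x * poly F x" "poly B x * poly G x"] by (simp add: abv_mult)
    also have "\<dots> \<le> ?B"
      using bound[OF MA(2) MA(1), of F] bound[OF MB(2) MB(1), of G] by (simp add: M_def)
    finally show ?thesis .
  qed
  moreover have "0 < M" unfolding M_def using MA(1) by (simp add: less_max_iff_disj)
  ultimately show ?thesis by blast
qed

lemma coprime_abv_poly_lower_bound: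
  fixes F G :: "'a poly"
  assumes "coprime F G"
  shows "\<exists>c>0. \<forall>x. c * max 1 (abv x) ^ max (degree F) (degree G) \<le> max (abv (poly F x)) (abv (poly G x))"
proof -
  let ?d = "max (degree F) (degree G)"
  obtain P where P: "P = F \<or> P = G" "P \<noteq> 0" "degree P = ?d"
    using assms by (cases "F = 0"; cases "G = 0"; cases "degree G \<le> degree F") (auto simp: max_def)
  obtain T where T1: "1 \<le> T" and T: "\<And>x. T \<le> abv x \<Longrightarrow> abv (poly P x) = abv (lead_coeff P) * abv x ^ ?d"
    using abv_poly_eq_leading_term[OF P(2)] P(3) by auto
  obtain M k where M0: "0 < M" and M: "\<And>x. 1 \<le> M * max 1 (abv x) ^ k * max (abv (poly F x)) (abv (poly G x))"
    using coprime_abv_poly_max_bounded_below[OF assms] by blast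
  have a0: "0 < abv (lead_coeff P)" using P(2) by (simp add: abv_pos)
  define c where "c = min (abv (lead_coeff P)) (1 / (M * T ^ (k + ?d)))"
  have "c * max 1 (abv x) ^ ?d \<le> max (abv (poly F x)) (abv (poly G x))" (is "_ \<le> ?m") for x
  proof (cases "T \<le> abv x")
    case True
    then have "c * max 1 (abv x) ^ ?d \<le> abv (poly P x)"
      using T T1 by (simp add: c_def max_def mult_right_mono abv_nonneg)
    then show ?thesis using P(1) by auto
  next
    case False
    have m: "max 1 (abv x) \<le> T" using False T1 by simp
    have "1 \<le> M * max 1 (abv x) ^ k * ?m" by (rule M)
    also have "\<dots> \<le> M * T ^ k * ?m"
      using m M0 by (intro mult_right_mono mult_left_mono power_mono) (auto simp: abv_nonneg le_max_iff_disj)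
    finally have one: "1 \<le> M * T ^ k * ?m" .
    have "0 \<le> c" "c \<le> 1 / (M * T ^ (k + ?d))" unfolding c_def using a0 M0 T1 by auto
    then have "c * max 1 (abv x) ^ ?d \<le> 1 / (M * T ^ (k + ?d)) * T ^ ?d"
      using m M0 by (intro mult_mono power_mono) auto
    also have "\<dots> = 1 / (M * T ^ k)" using T1 M0 by (simp add: power_add)
    also have "\<dots> \<le> ?m" using one M0 T1 by (simp add: pos_divide_le_eq mult.commute)
    finally show ?thesis .
  qed
  moreover have "0 < c" unfolding c_def using a0 M0 T1 by simp
  ultimately show ?thesis by blast
qed

lemma abv_less_perturb:
  assumes "abv b < abv a" "abv (a' - a) < r" "abv (b' - b) < r" "r \<le> abv a"
  shows "abv b' < abv a'"
proof -
  have "abv a' = abv a" using abv_add_eq_left[of "a' - a" a] assms(2,4) by simp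
  moreover have "abv b' < abv a" using abv_add_less[of b "abv a" "b' - b"] assms by simp
  ultimately show ?thesis by simp
qed

lemma abv_quotient_perturb:
  assumes "abv a \<le> abv b" "c \<le> abv b" "abv (a' - a) < e" "abv (b' - b) < e" "e \<le> c"
  shows "b' \<noteq> 0 \<and> abv (a' / b' - a / b) < e / c"
proof -
  have e0: "0 < e" using assms(3) abv_nonneg[of "a' - a"] by simp
  then have b0: "0 < abv b" using assms(2,5) by simp
  have "abv b' = abv b" using abv_add_eq_left[of "b' - b" b] assms(2,4,5) by simp
  then have "b' \<noteq> 0" "b \<noteq> 0" using b0 by auto
  then have quot: "a' / b' - a / b = ((a' - a) * b - a * (b' - b)) / (b' * b)"
    by (simp add: field_simps)
  have "abv (a * (b' - b)) \<le> abv b * abv (b' - b)"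
    using assms(1) by (simp add: abv_mult mult_right_mono abv_nonneg)
  also have "\<dots> < abv b * e" using assms(4) b0 by simp
  finally have "abv ((a' - a) * b - a * (b' - b)) < e * abv b"
    using assms(3) b0 by (intro abv_diff_less) (simp_all add: abv_mult mult.commute)
  then have "abv (a' / b' - a / b) < e * abv b / (abv b * abv b)"
    unfolding quot abv_divide abv_mult \<open>abv b' = abv b\<close> using b0
    by (intro divide_strict_right_mono) auto
  also have "\<dots> = e / abv b" using b0 by simp
  also have "\<dots> \<le> e / c" using assms(2) b0 e0 assms(5) by (simp add: divide_left_mono)
  finally show ?thesis using \<open>b' \<noteq> 0\<close> by blast
qed

lemma coeffs_close_pos: "coeffs_close abv d e P Q \<Longrightarrow> 0 < e"
  unfolding coeffs_close_def by (meson abv_nonneg le_less_trans le0)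

lemma coeffs_close_trans:
  "coeffs_close abv d e P Q \<Longrightarrow> coeffs_close abv d e Q R \<Longrightarrow> coeffs_close abv d e P R"
  unfolding coeffs_close_def
  using abv_add_less[of "coeff P i - coeff Q i" e "coeff Q i - coeff R i" for i] by auto

lemma coeffs_close_smult:
  "k \<noteq> 0 \<Longrightarrow> coeffs_close abv d (e / abv k) P Q \<Longrightarrow> coeffs_close abv d e (smult k P) (smult k Q)"
  unfolding coeffs_close_def
  by (simp add: abv_mult right_diff_distrib[symmetric] abv_pos pos_less_divide_eq mult.commute)

lemma abv_poly_diff_less:
  assumes "degree P \<le> d" "degree Q \<le> d" "coeffs_close abv d e P Q"
  shows "abv (poly P x - poly Q x) < e * max 1 (abv x) ^ d"
proof -
  have "0 < e" using assms(3) by (rule coeffs_close_pos)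
  moreover have "degree (P - Q) \<le> d" using assms(1,2) by (simp add: degree_diff_le)
  ultimately show ?thesis
    using abv_poly_less[of "P - Q" d e x] assms(3) by (simp add: coeffs_close_def)
qed

lemma ratd_open_ratd_ball: "ratd_open abv d (ratd_ball abv d e FG)"
  unfolding ratd_open_def
proof (intro conjI allI impI)
  show "ratd_ball abv d e FG \<subseteq> {FG. is_ratd d FG}" by (auto simp: ratd_ball_def)
next
  fix P Q and c :: 'a
  assume "(P, Q) \<in> ratd_ball abv d e FG \<and> c \<noteq> 0"
  then obtain k where "k \<noteq> 0" "c \<noteq> 0" "is_ratd d (P, Q)"
    "coeffs_close abv d e (smult k P) (fst FG)" "coeffs_close abv d e (smult k Q) (snd FG)"
    by (auto simp: ratd_ball_def)
  then show "(smult c P, smult c Q) \<in> ratd_ball abv d e FG"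
    unfolding ratd_ball_def by (auto intro!: exI[of _ "k / c"] is_ratd_smult)
next
  fix P Q assume "(P, Q) \<in> ratd_ball abv d e FG"
  then obtain k where k: "k \<noteq> 0"
    and close: "coeffs_close abv d e (smult k P) (fst FG)" "coeffs_close abv d e (smult k Q) (snd FG)"
    by (auto simp: ratd_ball_def)
  have "0 < e" using close(1) by (rule coeffs_close_pos)
  show "\<exists>e'>0. \<forall>P' Q'. is_ratd d (P', Q') \<and>
    (\<forall>i\<le>d. abv (coeff P' i - coeff P i) < e' \<and> abv (coeff Q' i - coeff Q i) < e') \<longrightarrow>
    (P', Q') \<in> ratd_ball abv d e FG"
  proof (intro exI[of _ "e / abv k"] conjI allI impI)
    show "0 < e / abv k" using \<open>0 < e\<close> k by (simp add: abv_pos)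
    fix P' Q'
    assume "is_ratd d (P', Q') \<and>
      (\<forall>i\<le>d. abv (coeff P' i - coeff P i) < e / abv k \<and> abv (coeff Q' i - coeff Q i) < e / abv k)"
    then have "coeffs_close abv d (e / abv k) P' P" "coeffs_close abv d (e / abv k) Q' Q"
      and ratd: "is_ratd d (P', Q')"
      by (auto simp: coeffs_close_def)
    then have "coeffs_close abv d e (smult k P') (smult k P)" "coeffs_close abv d e (smult k Q') (smult k Q)"
      using k coeffs_close_smult by blast+
    then show "(P', Q') \<in> ratd_ball abv d e FG"
      unfolding ratd_ball_def using k close ratd by (auto intro: coeffs_close_trans)
  qed
qed

lemma mem_ratd_ball_self: "is_ratd d FG \<Longrightarrow> 0 < e \<Longrightarrow> FG \<in> ratd_ball abv d e FG"
  by (cases FG) (auto simp: ratd_ball_def coeffs_close_def intro: exI[of _ 1])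

lemma rat_abs_gt1_iff:
  "poly F x \<noteq> 0 \<or> poly G x \<noteq> 0 \<Longrightarrow> rat_abs_gt1 abv (F, G) x \<longleftrightarrow> abv (poly G x) < abv (poly F x)"
  by (cases "poly G x = 0") (auto simp: rat_abs_gt1_def abv_divide abv_pos field_simps)

lemma ratd_ball_degrees:
  assumes "(P, Q) \<in> ratd_ball abv d e FG"
  obtains k where "k \<noteq> 0" "degree (smult k P) \<le> d" "degree (smult k Q) \<le> d"
    "coeffs_close abv d e (smult k P) (fst FG)" "coeffs_close abv d e (smult k Q) (snd FG)"
  using assms by (auto simp: ratd_ball_def is_ratd_def)

lemma ratd_ball_abs_gt1:
  assumes "(P, Q) \<in> ratd_ball abv d e (F, G)" "degree F \<le> d" "degree G \<le> d" "e \<le> c"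
    and lower: "c * max 1 (abv x) ^ d \<le> max (abv (poly F x)) (abv (poly G x))"
    and "1 < abv x" "rat_abs_gt1 abv (F, G) x"
  shows "rat_abs_gt1 abv (P, Q) x"
proof -
  obtain k where k: "k \<noteq> 0" "degree (smult k P) \<le> d" "degree (smult k Q) \<le> d"
    "coeffs_close abv d e (smult k P) F" "coeffs_close abv d e (smult k Q) G"
    using ratd_ball_degrees[OF assms(1)] by auto
  have m: "max 1 (abv x) = abv x" using \<open>1 < abv x\<close> by simp
  have "0 < e * abv x ^ d" using coeffs_close_pos[OF k(4)] \<open>1 < abv x\<close> by simp
  also have "e * abv x ^ d \<le> c * abv x ^ d" using \<open>e \<le> c\<close> by (simp add: mult_right_mono abv_nonneg)
  finally have "poly F x \<noteq> 0 \<or> poly G x \<noteq> 0" using lower unfolding m by auto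
  then have FG: "abv (poly G x) < abv (poly F x)" using assms(7) rat_abs_gt1_iff by blast
  then have "e * max 1 (abv x) ^ d \<le> abv (poly F x)"
    using lower \<open>e * abv x ^ d \<le> c * abv x ^ d\<close> unfolding m by (simp add: max_def)
  then have "abv (poly (smult k Q) x) < abv (poly (smult k P) x)"
    by (rule abv_less_perturb[OF FG abv_poly_diff_less[OF k(2) assms(2) k(4)]
          abv_poly_diff_less[OF k(3) assms(3) k(5)]])
  then have "abv (poly Q x) < abv (poly P x)" using k(1) by (simp add: abv_mult abv_pos)
  moreover from this have "poly P x \<noteq> 0" using abv_nonneg[of "poly Q x"] by auto
  ultimately show ?thesis using rat_abs_gt1_iff by blast
qed

lemma ratd_ball_quotient_close:
  assumes "(P, Q) \<in> ratd_ball abv d e (F, G)" "degree F \<le> d" "degree G \<le> d" "e \<le> c"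
    and lower: "c * max 1 (abv x) ^ d \<le> max (abv (poly F x)) (abv (poly G x))"
    and "abv x \<le> 1" "poly G x \<noteq> 0" "abv (poly F x / poly G x) \<le> 1"
  shows "poly Q x \<noteq> 0 \<and> abv (poly P x / poly Q x - poly F x / poly G x) < e / c"
proof -
  obtain k where k: "k \<noteq> 0" "degree (smult k P) \<le> d" "degree (smult k Q) \<le> d"
    "coeffs_close abv d e (smult k P) F" "coeffs_close abv d e (smult k Q) G"
    using ratd_ball_degrees[OF assms(1)] by auto
  have FG: "abv (poly F x) \<le> abv (poly G x)"
    using assms(7,8) by (simp add: abv_divide abv_pos pos_divide_le_eq)
  then have "c \<le> abv (poly G x)" using lower \<open>abv x \<le> 1\<close> by (simp add: max_absorb1 max_absorb2)
  then have "poly (smult k Q) x \<noteq> 0 \<and>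
      abv (poly (smult k P) x / poly (smult k Q) x - poly F x / poly G x) < e / c"
    using abv_poly_diff_less[OF k(2) assms(2) k(4), of x] abv_poly_diff_less[OF k(3) assms(3) k(5), of x]
      FG \<open>e \<le> c\<close> \<open>abv x \<le> 1\<close> by (intro abv_quotient_perturb) (auto simp: max_absorb1)
  then show ?thesis using k(1) by simp
qed

end

lemma Cv_field_abv_nonneg:
  fixes abv :: "'a::field_char_0 \<Rightarrow> real"
  assumes "Cv_field abv"
  shows "0 \<le> abv x"
proof -
  have "0 < degree [:-x, 0, 1:]" by simp
  then obtain y where "poly [:-x, 0, 1:] y = 0"
    using assms unfolding Cv_field_def alg_closed_field_def by blast
  then have "x = y * y" by (simp add: algebra_simps)
  then show ?thesis using assms unfolding Cv_field_def nonarch_abs_def by simp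
qed

lemma Cv_field_nonarch_absval: "Cv_field abv \<Longrightarrow> nonarch_absval abv"
  by unfold_locales (auto simp: Cv_field_def Cv_field_abv_nonneg)

theorem lemma5p6:
  fixes abv :: "'a::field_char_0 \<Rightarrow> real" and F G :: "'a poly" and d :: nat
  assumes "Cv_field abv"
    and "is_ratd d (F, G)" and "d \<ge> 2"
    and "\<forall>x. abv x > 1 \<longrightarrow> rat_abs_gt1 abv (F, G) x"
  shows "\<forall>\<gamma>>0. \<exists>W. ratd_open abv d W \<and> (F, G) \<in> W \<and>
           (\<forall>F' G'. (F', G') \<in> W \<longrightarrow>
              (\<forall>x. abv x > 1 \<longrightarrow> rat_abs_gt1 abv (F', G') x) \<and>
              (\<forall>x. poly G x \<noteq> 0 \<and> abv (poly F x / poly G x) \<le> 1 \<longrightarrow>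
                   poly G' x \<noteq> 0 \<and>
                   abv (poly F' x / poly G' x - poly F x / poly G x) < \<gamma>))"
proof (intro allI impI)
  fix \<gamma> :: real assume "0 < \<gamma>"
  interpret nonarch_absval abv using assms(1) by (rule Cv_field_nonarch_absval)
  have degs: "degree F \<le> d" "degree G \<le> d" "max (degree F) (degree G) = d"
    using assms(2) by (auto simp: is_ratd_def)
  obtain c where "0 < c"
    and lower: "\<And>x. c * max 1 (abv x) ^ d \<le> max (abv (poly F x)) (abv (poly G x))"
    using coprime_abv_poly_lower_bound[of F G] assms(2) degs(3) by (auto simp: is_ratd_def)
  define e where "e = c * min 1 (\<gamma> / 2)"
  have "0 < e" "e \<le> c" "e / c < \<gamma>"
    using \<open>0 < c\<close> \<open>0 < \<gamma>\<close> by (auto simp: e_def min_def)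
  let ?W = "ratd_ball abv d e (F, G)"
  have "rat_abs_gt1 abv (P, Q) x" if "(P, Q) \<in> ?W" "1 < abv x" for P Q x
    using ratd_ball_abs_gt1[OF that(1) degs(1,2) \<open>e \<le> c\<close> lower that(2)] that(2) assms(4) by blast
  moreover have "poly Q x \<noteq> 0 \<and> abv (poly P x / poly Q x - poly F x / poly G x) < \<gamma>"
    if "(P, Q) \<in> ?W" "poly G x \<noteq> 0" "abv (poly F x / poly G x) \<le> 1" for P Q x
  proof -
    have "abv x \<le> 1" using that(2,3) assms(4) unfolding rat_abs_gt1_def by force
    then show ?thesis
      using ratd_ball_quotient_close[OF that(1) degs(1,2) \<open>e \<le> c\<close> lower _ that(2,3)] \<open>e / c < \<gamma>\<close>
      by auto
  qed
  ultimately show "\<exists>W. ratd_open abv d W \<and> (F, G) \<in> W \<and>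
      (\<forall>F' G'. (F', G') \<in> W \<longrightarrow>
        (\<forall>x. abv x > 1 \<longrightarrow> rat_abs_gt1 abv (F', G') x) \<and>
        (\<forall>x. poly G x \<noteq> 0 \<and> abv (poly F x / poly G x) \<le> 1 \<longrightarrow>
           poly G' x \<noteq> 0 \<and> abv (poly F' x / poly G' x - poly F x / poly G x) < \<gamma>))"
    using ratd_open_ratd_ball mem_ratd_ball_self[OF assms(2) \<open>0 < e\<close>] by blast
qed

end
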